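(* Let $\mathcal{A}$ be a finite poset, $V$ a vector space and $(\pi_a)_{a\in\mathcal{A}}$ a family of projectors ($\pi_a^2=\pi_a$) of $V$. Then $(\pi_a)_{a\in\mathcal{A}}$ satisfies the intersection property if and only if it is decomposable.
   Context: For a family $(\pi_a)_{a\in\mathcal{A}}$ of endomorphisms of $V$ indexed by a finite poset, let $(s_a)_{a\in\mathcal{A}}$ be the unique family of endomorphisms with $\pi_a=\sum_{b\le a}s_b$ for all $a$ (Möbius inversion). Intersection property: for all $a,b\in\mathcal{A}$, $\pi_a\pi_b=\sum_{c\le a,\ c\le b}s_c$ (for a meet semilattice this is $\pi_a\pi_b=\pi_{a\wedge b}$). Let $\mathcal{A}^+$ be $\mathcal{A}$ with a new greatest element $1$ adjoined. The family is decomposable if there are subspaces $(S_a)_{a\in\mathcal{A}^+}$ of $V$ such that the summation map $\bigoplus_{a\in\mathcal{A}^+}S_a\to V$ is an isomorphism and for every $a\in\mathcal{A}$ and every $(w_b)\in\bigoplus_{b\in\mathcal{A}^+}S_b$, $\pi_a(\sum_b w_b)=\sum_{b\le a}w_b$. *)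

theory Defs
  imports Complex_Main
begin

definition mobius_inv :: "('a::{finite,order} \<Rightarrow> 'v \<Rightarrow> 'v::ab_group_add) \<Rightarrow> 'a \<Rightarrow> 'v \<Rightarrow> 'v" where
  "mobius_inv \<pi> = (THE s. \<forall>a v. \<pi> a v = (\<Sum>b\<in>{b. b \<le> a}. s b v))"

definition intersection_property :: "('a::{finite,order} \<Rightarrow> 'v \<Rightarrow> 'v::ab_group_add) \<Rightarrow> bool" where
  "intersection_property \<pi> \<longleftrightarrow>
     (\<forall>a b v. \<pi> a (\<pi> b v) = (\<Sum>c\<in>{c. c \<le> a \<and> c \<le> b}. mobius_inv \<pi> c v))"

text \<open>A^+ is modelled as 'a option: Some a is the element a of A, None is the new greatest
  element 1. The elements of A^+ below a (for a in A) are exactly Some b with b <= a.\<close>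
definition decomposable ::
  "('k::field \<Rightarrow> 'v \<Rightarrow> 'v::ab_group_add) \<Rightarrow> ('a::{finite,order} \<Rightarrow> 'v \<Rightarrow> 'v) \<Rightarrow> bool" where
  "decomposable scale \<pi> \<longleftrightarrow>
     (\<exists>S :: 'a option \<Rightarrow> 'v set.
        (\<forall>b. module.subspace scale (S b)) \<and>
        (\<forall>v. \<exists>!w. (\<forall>b. w b \<in> S b) \<and> (\<Sum>b\<in>UNIV. w b) = v) \<and>
        (\<forall>a w. (\<forall>b. w b \<in> S b) \<longrightarrow>
            \<pi> a (\<Sum>b\<in>UNIV. w b) = (\<Sum>b\<in>{b. b \<le> a}. w (Some b))))"

end

theory Submission
  imports Defs
begin

text \<open>Write \<open>s\<close> for the Moebius inverse of \<open>\<pi>\<close>. Under the intersection property, induction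
  along the poset gives \<open>\<pi>\<^sub>a s\<^sub>b = [b \<le> a] s\<^sub>b\<close>, hence \<open>s\<^sub>a s\<^sub>b = [a = b] s\<^sub>b\<close>: the \<open>s\<^sub>a\<close> are
  orthogonal projectors, and \<open>V\<close> is the direct sum of their images and of their common kernel,
  which serves as the summand of the new top element. In this decomposition the \<open>a\<close>-component of
  \<open>v\<close> is \<open>s\<^sub>a v\<close>, so \<open>\<pi>\<^sub>a = \<Sum>\<^sub>b\<^sub>\<le>\<^sub>a s\<^sub>b\<close> is exactly the required formula. Conversely, given a
  decomposition, the component maps \<open>v \<mapsto> w\<^sub>b\<close> satisfy the defining relation of the Moebius
  inverse, so they are the \<open>s\<^sub>b\<close>, and \<open>\<pi>\<^sub>a \<pi>\<^sub>b v\<close> is computed componentwise.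
  Idempotence of the \<open>\<pi>\<^sub>a\<close> is never used: it is the case \<open>a = b\<close> of the intersection property.\<close>

lemma finite_order_less_induct [case_names less]:
  fixes a :: "'a::{finite,order}"
  assumes step: "\<And>a. (\<And>b. b < a \<Longrightarrow> P b) \<Longrightarrow> P a"
  shows "P a"
proof (induction "card {b. b < a}" arbitrary: a rule: less_induct)
  case less
  show ?case
  proof (rule step)
    fix b assume "b < a"
    then have "{c. c < b} \<subset> {c. c < a}" by auto
    then have "card {c. c < b} < card {c. c < a}" by (intro psubset_card_mono) auto
    then show "P b" using less by blast
  qed
qed

lemma atMost_eq_insert_lessThan: "{b. b \<le> (a::'a::order)} = insert a {b. b < a}"
  by auto

lemma sum_UNIV_option:
  fixes f :: "'a::finite option \<Rightarrow> 'b::comm_monoid_add"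
  shows "(\<Sum>b\<in>UNIV. f b) = f None + (\<Sum>a\<in>UNIV. f (Some a))"
  by (simp add: UNIV_option_conv sum.reindex)

function mobius :: "('a::{finite,order} \<Rightarrow> 'v \<Rightarrow> 'v::ab_group_add) \<Rightarrow> 'a \<Rightarrow> 'v \<Rightarrow> 'v" where
  "mobius p a v = p a v - (\<Sum>b\<in>{b. b < a}. mobius p b v)"
  by auto
termination
  by (relation "measure (\<lambda>(p, a, v). card {b. b < a})") (auto intro!: psubset_card_mono)

declare mobius.simps [simp del]

lemma sum_mobius: "p a v = (\<Sum>b\<in>{b. b \<le> a}. mobius p b v)"
  by (simp add: atMost_eq_insert_lessThan mobius.simps[of p a v])

lemma mobius_unique:
  assumes "\<And>a v. p a v = (\<Sum>b\<in>{b. b \<le> a}. s b v)"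
  shows "s = mobius p"
proof (intro ext)
  fix a v
  show "s a v = mobius p a v"
  proof (induction a rule: finite_order_less_induct)
    case (less a)
    have "p a v = s a v + (\<Sum>b\<in>{b. b < a}. s b v)"
      using assms by (simp add: atMost_eq_insert_lessThan)
    then have "s a v = p a v - (\<Sum>b\<in>{b. b < a}. mobius p b v)"
      using less by (simp add: algebra_simps)
    then show ?case by (simp add: mobius.simps[of p a v])
  qed
qed

lemma mobius_inv_eq_mobius: "mobius_inv p = mobius p"
  unfolding mobius_inv_def
  by (rule the_equality) (auto intro: sum_mobius mobius_unique)

lemma sum_mobius_inv: "p a v = (\<Sum>b\<in>{b. b \<le> a}. mobius_inv p b v)"
  unfolding mobius_inv_eq_mobius by (rule sum_mobius)

lemma mobius_inv_unique:
  assumes "\<And>a v. p a v = (\<Sum>b\<in>{b. b \<le> a}. s b v)"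
  shows "mobius_inv p = s"
  using mobius_unique[OF assms] by (simp add: mobius_inv_eq_mobius)

lemma mobius_inv_rec: "mobius_inv p a v = p a v - (\<Sum>b\<in>{b. b < a}. mobius_inv p b v)"
  by (simp add: mobius_inv_eq_mobius mobius.simps[of p a v])

context vector_space
begin

lemma linear_mobius_inv:
  assumes "\<And>a. Vector_Spaces.linear scale scale (p a)"
  shows "Vector_Spaces.linear scale scale (mobius_inv p a)"
proof (induction a rule: finite_order_less_induct)
  case (less a)
  interpret vector_space_pair scale scale ..
  have "Vector_Spaces.linear scale scale (\<lambda>v. p a v - (\<Sum>b\<in>{b. b < a}. mobius_inv p b v))"
    using assms less by (intro linear_compose_sub linear_compose_sum) auto
  then show ?case
    by (simp add: mobius_inv_rec[of p a, abs_def])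
qed

lemma intersection_property_comp_mobius_inv:
  assumes lin: "\<And>a. Vector_Spaces.linear scale scale (\<pi> a)" and ip: "intersection_property \<pi>"
  shows "\<pi> a (mobius_inv \<pi> b v) = (if b \<le> a then mobius_inv \<pi> b v else 0)"
proof (induction b arbitrary: a rule: finite_order_less_induct)
  case (less b)
  let ?s = "mobius_inv \<pi>"
  interpret Vector_Spaces.linear scale scale "\<pi> a" by (rule lin)
  have "\<pi> a (?s b v) = \<pi> a (\<pi> b v) - (\<Sum>c\<in>{c. c < b}. \<pi> a (?s c v))"
    by (simp add: mobius_inv_rec[of \<pi> b v] diff sum)
  also have "\<dots> = (\<Sum>c\<in>{c. c \<le> a \<and> c \<le> b}. ?s c v) - (\<Sum>c\<in>{c. c < b \<and> c \<le> a}. ?s c v)"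
    using ip less by (simp add: intersection_property_def sum.inter_filter[symmetric])
  also have "\<dots> = (if b \<le> a then ?s b v else 0)"
  proof (cases "b \<le> a")
    case True
    then have "{c. c \<le> a \<and> c \<le> b} = insert b {c. c < b \<and> c \<le> a}" by auto
    with True show ?thesis by simp
  next
    case False
    then have "{c. c \<le> a \<and> c \<le> b} = {c. c < b \<and> c \<le> a}" by (auto simp: order.strict_iff_order)
    with False show ?thesis by simp
  qed
  finally show ?case .
qed

lemma intersection_property_mobius_inv_orthogonal:
  assumes lin: "\<And>a. Vector_Spaces.linear scale scale (\<pi> a)" and ip: "intersection_property \<pi>"
  shows "mobius_inv \<pi> a (mobius_inv \<pi> b v) = (if a = b then mobius_inv \<pi> b v else 0)"
proof (induction a rule: finite_order_less_induct)
  case (less a)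
  let ?s = "mobius_inv \<pi>"
  have "?s a (?s b v) = (if b \<le> a then ?s b v else 0) - (\<Sum>c\<in>{c. c < a}. if c = b then ?s b v else 0)"
    using less by (simp add: mobius_inv_rec[of \<pi> a "?s b v"]
        intersection_property_comp_mobius_inv[OF lin ip])
  then show ?case
    by (auto simp: order.strict_iff_order)
qed

lemma decomposable_if_orthogonal_idempotents:
  assumes lin: "\<And>a. Vector_Spaces.linear scale scale (s a)"
    and orth: "\<And>a b v. s a (s b v) = (if a = b then s b v else 0)"
    and \<pi>_s: "\<And>a v. \<pi> a v = (\<Sum>b\<in>{b. b \<le> a}. s b v)"
  shows "decomposable scale \<pi>"
proof -
  define S where "S = (\<lambda>b. case b of Some a \<Rightarrow> {x. s a x = x} | None \<Rightarrow> {x. \<forall>a. s a x = 0})"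
  have component: "s a (\<Sum>b\<in>UNIV. w b) = w (Some a)" if w_in: "\<forall>b. w b \<in> S b" for w a
  proof -
    interpret Vector_Spaces.linear scale scale "s a" by (rule lin)
    have "s a (w (Some c)) = (if a = c then w (Some c) else 0)" for c
      using spec[OF w_in, of "Some c"] orth[of a c "w (Some c)"] by (simp add: S_def)
    moreover have "s a (w None) = 0"
      using spec[OF w_in, of None] by (simp add: S_def)
    ultimately show ?thesis
      by (simp add: sum_UNIV_option add sum)
  qed
  show ?thesis
    unfolding decomposable_def
  proof (intro exI[of _ S] conjI allI impI)
    fix b
    interpret vector_space_pair scale scale ..
    show "subspace (S b)"
      using linear_0[OF lin] linear_add[OF lin] linear_scale[OF lin]
      by (cases b) (auto simp: S_def subspace_def)
  next
    fix v
    define w where "w = (\<lambda>b. case b of Some a \<Rightarrow> s a v | None \<Rightarrow> v - (\<Sum>a\<in>UNIV. s a v))"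
    have "s a (v - (\<Sum>c\<in>UNIV. s c v)) = 0" for a
    proof -
      interpret Vector_Spaces.linear scale scale "s a" by (rule lin)
      show ?thesis by (simp add: diff sum orth)
    qed
    then have "\<forall>b. w b \<in> S b"
      by (auto simp: S_def w_def orth split: option.split)
    moreover have "(\<Sum>b\<in>UNIV. w b) = v"
      by (simp add: sum_UNIV_option w_def)
    moreover have "w' = w" if "\<forall>b. w' b \<in> S b" "(\<Sum>b\<in>UNIV. w' b) = v" for w'
    proof
      fix b
      have "w' (Some a) = s a v" for a
        using component that by metis
      then show "w' b = w b"
        using that(2) by (cases b) (auto simp: w_def sum_UNIV_option eq_diff_eq)
    qed
    ultimately show "\<exists>!w. (\<forall>b. w b \<in> S b) \<and> (\<Sum>b\<in>UNIV. w b) = v"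
      by blast
  next
    fix a w
    assume "\<forall>b. w b \<in> S b"
    then show "\<pi> a (\<Sum>b\<in>UNIV. w b) = (\<Sum>b\<in>{b. b \<le> a}. w (Some b))"
      by (simp add: \<pi>_s component)
  qed
qed

lemma decomposable_if_intersection_property:
  assumes "\<And>a. Vector_Spaces.linear scale scale (\<pi> a)" and "intersection_property \<pi>"
  shows "decomposable scale \<pi>"
  using assms
  by (intro decomposable_if_orthogonal_idempotents[where s = "mobius_inv \<pi>"] linear_mobius_inv
      intersection_property_mobius_inv_orthogonal sum_mobius_inv)

lemma intersection_property_if_decomposable:
  assumes "decomposable scale \<pi>"
  shows "intersection_property \<pi>"
proof -
  obtain S where
    S_subspace: "\<And>b. subspace (S b)" and
    S_decomp: "\<And>v. \<exists>!w. (\<forall>b. w b \<in> S b) \<and> (\<Sum>b\<in>UNIV. w b) = v" and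
    S_\<pi>: "\<And>a w. \<forall>b. w b \<in> S b \<Longrightarrow> \<pi> a (\<Sum>b\<in>UNIV. w b) = (\<Sum>b\<in>{b. b \<le> a}. w (Some b))"
    using assms unfolding decomposable_def by blast
  obtain W where W_in: "\<And>v b. W v b \<in> S b" and W_sum: "\<And>v. (\<Sum>b\<in>UNIV. W v b) = v"
    using S_decomp by metis
  have \<pi>_W: "\<pi> a v = (\<Sum>b\<in>{b. b \<le> a}. W v (Some b))" for a v
    using S_\<pi>[of "W v" a] W_in W_sum by simp
  then have mobius_inv_W: "mobius_inv \<pi> = (\<lambda>b v. W v (Some b))"
    by (rule mobius_inv_unique)
  have S_0: "0 \<in> S b" for b
    using S_subspace by (rule subspace_0)
  show ?thesis
    unfolding intersection_property_def
  proof (intro allI)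
    fix a b v
    define w where "w = (\<lambda>c. case c of Some c \<Rightarrow> if c \<le> b then W v (Some c) else 0 | None \<Rightarrow> 0)"
    have w_in: "\<forall>c. w c \<in> S c"
      by (auto simp: w_def W_in S_0 split: option.split)
    have "\<pi> b v = (\<Sum>c\<in>UNIV. w c)"
      by (simp add: \<pi>_W sum_UNIV_option w_def sum.inter_filter[symmetric])
    then have "\<pi> a (\<pi> b v) = (\<Sum>c\<in>{c. c \<le> a}. w (Some c))"
      using S_\<pi>[OF w_in] by simp
    also have "\<dots> = (\<Sum>c\<in>{c. c \<le> a \<and> c \<le> b}. mobius_inv \<pi> c v)"
      by (simp add: w_def mobius_inv_W sum.inter_filter[symmetric] conj_commute)
    finally show "\<pi> a (\<pi> b v) = (\<Sum>c\<in>{c. c \<le> a \<and> c \<le> b}. mobius_inv \<pi> c v)" .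
  qed
qed

end

theorem theorem3:
  fixes scale :: "'k::field \<Rightarrow> 'v \<Rightarrow> 'v::ab_group_add"
    and \<pi> :: "'a::{finite,order} \<Rightarrow> 'v \<Rightarrow> 'v"
  assumes "vector_space scale"
    and "\<forall>a. Vector_Spaces.linear scale scale (\<pi> a)"
    and "\<forall>a. \<pi> a \<circ> \<pi> a = \<pi> a"
  shows "intersection_property \<pi> \<longleftrightarrow> decomposable scale \<pi>"
proof -
  interpret vector_space scale by (rule assms(1))
  show ?thesis
    using assms(2) decomposable_if_intersection_property intersection_property_if_decomposable
    by blast
qed

end
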